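(* Let $D$ be a dataset, $\Omega=\{\omega_1,\dots,\omega_k\}$ a finite set of outcomes, $q$ a real-valued quality function with sensitivity $\Delta>0$, and $\varepsilon>0$; let $q_*=\max_i q(D,\omega_i)$. Then the output distributions of Intermediate Algorithm A and Intermediate Algorithm B (defined below) on these inputs are the same.
   Context: $\mathrm{Expo}(\lambda)$ denotes the exponential distribution with rate $\lambda$, density $\lambda e^{-\lambda x}\mathbf{1}[x\ge0]$. Intermediate Algorithm A: compute $q_*$; for each $i=1,\dots,k$ independently set $v_i=q(D,\omega_i)+X_i$ with $X_i\sim\mathrm{Expo}(\varepsilon/(2\Delta))$; let $S=\{i: v_i\ge q_*\}$; return an element of $S$ chosen uniformly at random. Intermediate Algorithm B: compute $q_*$; for each $i=1,\dots,k$ independently set $v_i^\top=\min\{q_*,\,q(D,\omega_i)+X_i\}$ with $X_i\sim\mathrm{Expo}(\varepsilon/(2\Delta))$ and draw $z_i\sim\mathrm{Expo}(\varepsilon/(2\Delta))$ (all these random variables independent); let $S'=\{i: v_i^\top=q_*\}$; return $\arg\max_{i\in S'}(v_i^\top+z_i)$ (ties occur with probability zero). *)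

theory Defs
  imports "HOL-Probability.Probability"
begin

definition expo :: "real \<Rightarrow> real measure" where
  "expo l = density lborel (exponential_density l)"

definition qstar :: "('d \<Rightarrow> 'o \<Rightarrow> real) \<Rightarrow> 'd \<Rightarrow> (nat \<Rightarrow> 'o) \<Rightarrow> nat \<Rightarrow> real" where
  "qstar q D omega k = Max ((\<lambda>i. q D (omega i)) ` {..<k})"

definition alg_A :: "('d \<Rightarrow> 'o \<Rightarrow> real) \<Rightarrow> 'd \<Rightarrow> (nat \<Rightarrow> 'o) \<Rightarrow> nat \<Rightarrow> real \<Rightarrow> real \<Rightarrow> 'o measure" where
  "alg_A q D omega k Delta eps =
     (PiM {..<k} (\<lambda>_. expo (eps / (2 * Delta)))) \<bind>
     (\<lambda>X. let S = {i \<in> {..<k}. q D (omega i) + X i \<ge> qstar q D omega k}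
          in distr (uniform_measure (count_space UNIV) S) (count_space UNIV) omega)"

definition alg_B :: "('d \<Rightarrow> 'o \<Rightarrow> real) \<Rightarrow> 'd \<Rightarrow> (nat \<Rightarrow> 'o) \<Rightarrow> nat \<Rightarrow> real \<Rightarrow> real \<Rightarrow> 'o measure" where
  "alg_B q D omega k Delta eps =
     distr (PiM {..<k} (\<lambda>_. expo (eps / (2 * Delta))) \<Otimes>\<^sub>M PiM {..<k} (\<lambda>_. expo (eps / (2 * Delta))))
       (count_space UNIV)
       (\<lambda>(X, z). let qs = qstar q D omega k;
                     v = (\<lambda>i. min qs (q D (omega i) + X i));
                     S' = {i \<in> {..<k}. v i = qs}
                 in omega (arg_max_on (\<lambda>i. v i + z i) S'))"

end

theory Submission
  imports Defs
begin

(* Both algorithms use the same noise X and hence the same set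
   S = {i. q(D, omega_i) + X_i >= q_*}, which is almost surely nonempty because X >= 0 and q_*
   is attained. In Algorithm B every index of S' = S has truncated score exactly q_*, so B
   returns the argmax over S of the independent noise z. The coordinates of z are i.i.d. and
   atomless, so z is almost surely injective and its law is invariant under transpositions of
   coordinates; hence its argmax over a fixed finite set S is uniform on S, which is precisely
   the choice made by Algorithm A. *)

lemma is_arg_max_arg_max_on:
  fixes f :: "'a \<Rightarrow> 'b::linorder"
  assumes "finite S" "S \<noteq> {}"
  shows "is_arg_max f (\<lambda>x. x \<in> S) (arg_max_on f S)"
proof -
  have "Max (f ` S) \<in> f ` S" using assms by simp
  then obtain m where "m \<in> S" "f m = Max (f ` S)" by auto
  then have "is_arg_max f (\<lambda>x. x \<in> S) m"
    using assms by (auto simp: is_arg_max_linorder)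
  then show ?thesis
    unfolding arg_max_on_def arg_max_def by (rule someI)
qed

lemma arg_max_on_in: "finite S \<Longrightarrow> S \<noteq> {} \<Longrightarrow> arg_max_on f S \<in> S"
  for f :: "'a \<Rightarrow> 'b::linorder"
  using is_arg_max_arg_max_on[of S f] by (simp add: is_arg_max_def)

lemma arg_max_on_ge: "finite S \<Longrightarrow> y \<in> S \<Longrightarrow> f y \<le> f (arg_max_on f S)"
  for f :: "'a \<Rightarrow> 'b::linorder"
  using is_arg_max_arg_max_on[of S f] by (auto simp: is_arg_max_linorder)

lemma arg_max_on_eqI:
  fixes f :: "'a \<Rightarrow> 'b::linorder"
  assumes "inj_on f S" "m \<in> S" "\<And>y. y \<in> S \<Longrightarrow> f y \<le> f m"
  shows "arg_max_on f S = m"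
  unfolding arg_max_on_def arg_max_def
proof (rule some_equality)
  show "is_arg_max f (\<lambda>x. x \<in> S) m"
    using assms by (auto simp: is_arg_max_linorder)
next
  fix x assume "is_arg_max f (\<lambda>x. x \<in> S) x"
  then have "x \<in> S" "f x = f m"
    using assms by (auto simp: is_arg_max_linorder intro: order.antisym)
  then show "x = m" using assms by (auto dest: inj_onD)
qed

lemma arg_max_on_order_cong:
  fixes f :: "'a \<Rightarrow> 'b::linorder" and g :: "'a \<Rightarrow> 'c::linorder"
  assumes "\<And>x y. x \<in> S \<Longrightarrow> y \<in> S \<Longrightarrow> f x \<le> f y \<longleftrightarrow> g x \<le> g y"
  shows "arg_max_on f S = arg_max_on g S"
proof -
  have "is_arg_max f (\<lambda>x. x \<in> S) = is_arg_max g (\<lambda>x. x \<in> S)"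
    using assms by (auto simp: is_arg_max_linorder fun_eq_iff)
  then show ?thesis by (simp add: arg_max_on_def arg_max_def)
qed

lemma arg_max_on_comp_bij:
  fixes z :: "'a \<Rightarrow> 'b::linorder"
  assumes "bij_betw s S S" "inj_on z S" "finite S" "S \<noteq> {}"
  shows "arg_max_on z S = s (arg_max_on (z \<circ> s) S)"
proof (rule arg_max_on_eqI)
  let ?m = "arg_max_on (z \<circ> s) S"
  have "?m \<in> S" using assms(3,4) by (rule arg_max_on_in)
  then show "s ?m \<in> S" using assms(1) by (auto dest: bij_betw_apply)
  fix y assume "y \<in> S"
  then obtain y' where "y' \<in> S" "y = s y'"
    using assms(1) by (auto simp: bij_betw_def)
  then show "z y \<le> z (s ?m)"
    using arg_max_on_ge[OF assms(3), of y' "z \<circ> s"] by simp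
qed fact

lemma arg_max_on_min_threshold:
  fixes v z :: "'a \<Rightarrow> real"
  shows "arg_max_on (\<lambda>i. min c (v i) + z i) {i \<in> I. min c (v i) = c} = arg_max_on z {i \<in> I. c \<le> v i}"
proof -
  have "{i \<in> I. min c (v i) = c} = {i \<in> I. c \<le> v i}"
    by (auto simp: min_def)
  moreover have "arg_max_on (\<lambda>i. min c (v i) + z i) {i \<in> I. c \<le> v i} = arg_max_on z {i \<in> I. c \<le> v i}"
    by (rule arg_max_on_order_cong) (simp add: min_def)
  ultimately show ?thesis by simp
qed

lemma measurable_finite_set_valued:
  assumes "finite K" "\<And>x. x \<in> space M \<Longrightarrow> G x \<subseteq> K"
    and "\<And>i. i \<in> K \<Longrightarrow> Measurable.pred M (\<lambda>x. i \<in> G x)"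
  shows "G \<in> M \<rightarrow>\<^sub>M count_space (Pow K)"
proof (subst measurable_count_space_eq2)
  show "G \<in> space M \<rightarrow> Pow K \<and> (\<forall>a\<in>Pow K. G -` {a} \<inter> space M \<in> sets M)"
  proof (intro conjI ballI)
    show "G \<in> space M \<rightarrow> Pow K" using assms(2) by blast
    fix a assume "a \<in> Pow K"
    then have "G -` {a} \<inter> space M = {x \<in> space M. \<forall>i\<in>K. i \<in> G x \<longleftrightarrow> i \<in> a}"
      using assms(2) by blast
    also have "\<dots> \<in> sets M"
      using assms(1,3) by measurable
    finally show "G -` {a} \<inter> space M \<in> sets M" .
  qed
qed (use assms(1) in simp)

lemma measurable_arg_max_on:
  fixes f :: "'a \<Rightarrow> 'i \<Rightarrow> real"
  assumes "finite K" and S: "S \<in> M \<rightarrow>\<^sub>M count_space (Pow K)"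
    and f: "\<And>i. i \<in> K \<Longrightarrow> (\<lambda>x. f x i) \<in> borel_measurable M"
  shows "(\<lambda>x. arg_max_on (f x) (S x)) \<in> M \<rightarrow>\<^sub>M count_space UNIV"
proof -
  define G where "G x = {i \<in> S x. \<forall>j\<in>S x. f x j \<le> f x i}" for x
  have S_sub: "S x \<subseteq> K" if "x \<in> space M" for x
    using measurable_space[OF S that] by simp
  have mem_S: "Measurable.pred M (\<lambda>x. i \<in> S x)" for i
    by (rule measurable_compose[OF S]) simp
  have "G \<in> M \<rightarrow>\<^sub>M count_space (Pow K)"
  proof (rule measurable_finite_set_valued[OF assms(1)])
    show "G x \<subseteq> K" if "x \<in> space M" for x
      using S_sub[OF that] by (auto simp: G_def)
    fix i assume "i \<in> K"
    have "Measurable.pred M (\<lambda>x. i \<in> S x \<and> (\<forall>j\<in>K. j \<in> S x \<longrightarrow> f x j \<le> f x i))"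
      using assms(1) f \<open>i \<in> K\<close> mem_S by measurable
    moreover have "i \<in> G x \<longleftrightarrow> i \<in> S x \<and> (\<forall>j\<in>K. j \<in> S x \<longrightarrow> f x j \<le> f x i)"
      if "x \<in> space M" for x
      using S_sub[OF that] by (auto simp: G_def)
    ultimately show "Measurable.pred M (\<lambda>x. i \<in> G x)"
      by (simp cong: measurable_cong)
  qed
  moreover have "arg_max_on (f x) (S x) = (SOME i. i \<in> G x)" for x
    by (simp add: G_def arg_max_on_def arg_max_def is_arg_max_linorder Ball_def)
  ultimately show ?thesis
    by (simp add: measurable_compose[where g = "\<lambda>A. SOME i. i \<in> A"])
qed

lemma measurable_PiM_component_real:
  fixes M :: "real measure"
  assumes "sets M = sets borel" "i \<in> I"
  shows "(\<lambda>z. z i) \<in> borel_measurable (\<Pi>\<^sub>M i\<in>I. M)"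
  using measurable_component_singleton[OF assms(2), of "\<lambda>_. M"]
  by (simp add: measurable_cong_sets[OF refl assms(1)])

lemma measurable_arg_max_on_PiM:
  fixes M :: "real measure"
  assumes "sets M = sets borel" "finite T" "T \<subseteq> I"
  shows "(\<lambda>z. arg_max_on z T) \<in> (\<Pi>\<^sub>M i\<in>I. M) \<rightarrow>\<^sub>M count_space UNIV"
  using assms by (intro measurable_arg_max_on[where K = T]) (auto intro: measurable_PiM_component_real)

lemma (in pair_prob_space) distr_pair_measure_eq_bind:
  assumes f: "f \<in> M1 \<Otimes>\<^sub>M M2 \<rightarrow>\<^sub>M N"
  shows "distr (M1 \<Otimes>\<^sub>M M2) N f = M1 \<bind> (\<lambda>x. distr M2 N (\<lambda>y. f (x, y)))"
proof (rule measure_eqI)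
  have kernel: "(\<lambda>x. distr M2 N (\<lambda>y. f (x, y))) \<in> M1 \<rightarrow>\<^sub>M subprob_algebra N"
    using f M2.M_in_subprob by (intro measurable_distr2[where M = M2]) auto
  then show "sets (distr (M1 \<Otimes>\<^sub>M M2) N f) = sets (M1 \<bind> (\<lambda>x. distr M2 N (\<lambda>y. f (x, y))))"
    by (simp add: sets_bind M1.not_empty)
  fix A assume "A \<in> sets (distr (M1 \<Otimes>\<^sub>M M2) N f)"
  then have A: "A \<in> sets N" by simp
  have "emeasure (distr (M1 \<Otimes>\<^sub>M M2) N f) A = emeasure (M1 \<Otimes>\<^sub>M M2) (f -` A \<inter> space (M1 \<Otimes>\<^sub>M M2))"
    using f A by (rule emeasure_distr)
  also have "\<dots> = \<integral>\<^sup>+x. emeasure M2 (Pair x -` (f -` A \<inter> space (M1 \<Otimes>\<^sub>M M2))) \<partial>M1"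
    using f A by (intro M2.emeasure_pair_measure_alt measurable_sets)
  also have "\<dots> = \<integral>\<^sup>+x. emeasure (distr M2 N (\<lambda>y. f (x, y))) A \<partial>M1"
  proof (rule nn_integral_cong)
    fix x assume x: "x \<in> space M1"
    then have "(\<lambda>y. f (x, y)) \<in> M2 \<rightarrow>\<^sub>M N"
      using f by measurable
    then show "emeasure M2 (Pair x -` (f -` A \<inter> space (M1 \<Otimes>\<^sub>M M2)))
        = emeasure (distr M2 N (\<lambda>y. f (x, y))) A"
      using x A by (auto simp: emeasure_distr space_pair_measure intro!: arg_cong[where f = "emeasure M2"])
  qed
  also have "\<dots> = emeasure (M1 \<bind> (\<lambda>x. distr M2 N (\<lambda>y. f (x, y)))) A"
    using kernel A by (intro emeasure_bind[symmetric] M1.not_empty) auto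
  finally show "emeasure (distr (M1 \<Otimes>\<^sub>M M2) N f) A
      = emeasure (M1 \<bind> (\<lambda>x. distr M2 N (\<lambda>y. f (x, y)))) A" .
qed

lemma subprob_space_uniform_count_space:
  assumes "finite T"
  shows "subprob_space (uniform_measure (count_space UNIV) T)"
proof (cases "T = {}")
  case True
  then show ?thesis by (intro subprob_spaceI) auto
next
  case False
  then show ?thesis
    using assms by (intro prob_space_imp_subprob_space prob_space_uniform_measure) auto
qed

locale atomless_real_prob_space = prob_space M for M :: "real measure" +
  assumes sets_eq_borel: "sets M = sets borel"
    and emeasure_singleton: "emeasure M {x} = 0"
begin

lemma AE_PiM_components_neq:
  assumes "i \<in> I" "j \<in> I" "i \<noteq> j"
  shows "AE z in (\<Pi>\<^sub>M i\<in>I. M). z i \<noteq> z j"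
proof -
  let ?Q = "\<Pi>\<^sub>M i\<in>I - {i}. M"
  interpret Q: prob_space ?Q by (intro prob_space_PiM prob_space_axioms)
  interpret pair_sigma_finite M ?Q by unfold_locales
  have j: "j \<in> I - {i}" using assms by simp
  have upd: "(\<lambda>(x, X). X(i := x)) \<in> M \<Otimes>\<^sub>M ?Q \<rightarrow>\<^sub>M (\<Pi>\<^sub>M i\<in>I. M)"
    unfolding case_prod_beta'
    by (rule measurable_fun_upd[OF _ measurable_snd measurable_fst]) (use assms(1) in auto)
  have diag: "{p \<in> space (M \<Otimes>\<^sub>M ?Q). fst p \<noteq> snd p j} \<in> sets (M \<Otimes>\<^sub>M ?Q)"
    using measurable_fst[of M ?Q] measurable_snd''[OF measurable_PiM_component_real[OF sets_eq_borel j]]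
    unfolding measurable_cong_sets[OF refl sets_eq_borel] by measurable
  have "AE x in M. x \<noteq> c" for c
    by (rule AE_I'[of "{c}"]) (auto simp: null_sets_def sets_eq_borel emeasure_singleton)
  then have "AE p in M \<Otimes>\<^sub>M ?Q. fst p \<noteq> snd p j"
    by (simp add: AE_commute[OF diag] AE_pair_iff[OF diag, symmetric])
  then have "AE z in distr (M \<Otimes>\<^sub>M ?Q) (\<Pi>\<^sub>M i\<in>I. M) (\<lambda>(x, X). X(i := x)). z i \<noteq> z j"
  proof (subst AE_distr_iff[OF upd])
    show "{z \<in> space (\<Pi>\<^sub>M i\<in>I. M). z i \<noteq> z j} \<in> sets (\<Pi>\<^sub>M i\<in>I. M)"
      by (intro sets.sets_Collect_neg borel_measurable_eq measurable_PiM_component_real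
          sets_eq_borel assms)
  qed (use assms in \<open>auto simp: case_prod_beta'\<close>)
  also have "distr (M \<Otimes>\<^sub>M ?Q) (\<Pi>\<^sub>M i\<in>I. M) (\<lambda>(x, X). X(i := x)) = (\<Pi>\<^sub>M i\<in>I. M)"
    using distr_pair_PiM_eq_PiM[of "I - {i}" "\<lambda>_. M" i] prob_space_axioms
    by (simp add: insert_absorb[OF assms(1)])
  finally show ?thesis .
qed

lemma AE_PiM_inj_on:
  assumes "finite T" "T \<subseteq> I"
  shows "AE z in (\<Pi>\<^sub>M i\<in>I. M). inj_on z T"
proof -
  have "AE z in (\<Pi>\<^sub>M i\<in>I. M). \<forall>i\<in>T. \<forall>j\<in>T. i \<noteq> j \<longrightarrow> z i \<noteq> z j"
    using assms by (intro AE_finite_allI) (auto intro: AE_PiM_components_neq)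
  then show ?thesis
    by (rule eventually_mono) (auto simp: inj_on_def)
qed

lemma measure_PiM_arg_max_on_swap:
  assumes T: "finite T" "T \<subseteq> I" and j: "j \<in> T" "j' \<in> T"
  shows "measure (\<Pi>\<^sub>M i\<in>I. M) {z \<in> space (\<Pi>\<^sub>M i\<in>I. M). arg_max_on z T = j'}
       = measure (\<Pi>\<^sub>M i\<in>I. M) {z \<in> space (\<Pi>\<^sub>M i\<in>I. M). arg_max_on z T = j}"
proof -
  let ?P = "\<Pi>\<^sub>M i\<in>I. M"
  let ?A = "\<lambda>j. {z \<in> space ?P. arg_max_on z T = j}"
  define s where "s = id(j := j', j' := j)"
  have s_s: "s (s i) = i" for i
    by (auto simp: s_def)
  have s_I: "s \<in> I \<rightarrow> I" and s_T: "bij_betw s T T"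
    using T j s_s by (auto simp: s_def intro!: bij_betw_byWitness[where f' = s])
  have inj_s: "inj_on s I"
    by (metis s_s inj_onI)
  define R where "R z = (\<lambda>i\<in>I. z (s i))" for z :: "_ \<Rightarrow> real"
  have R: "R \<in> ?P \<rightarrow>\<^sub>M ?P"
    unfolding R_def using s_I by (intro measurable_restrict measurable_component_singleton) auto
  have distr_R: "distr ?P ?P R = ?P"
    unfolding R_def using distr_PiM_reindex[OF prob_space_axioms inj_s s_I] by simp
  have A_sets: "?A i \<in> sets ?P" for i
    using measurable_sets[OF measurable_arg_max_on_PiM[OF sets_eq_borel T], of "{i}"]
    by (simp add: Int_def conj_commute)
  have "AE z in ?P. z \<in> R -` ?A j' \<inter> space ?P \<longleftrightarrow> z \<in> ?A j"
    using AE_PiM_inj_on[OF T]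
  proof (rule eventually_mono)
    fix z :: "_ \<Rightarrow> real" assume inj: "inj_on z T"
    have "arg_max_on (R z) T = arg_max_on (z \<circ> s) T"
      using T s_T by (intro arg_max_on_order_cong) (auto simp: R_def bij_betw_apply)
    then have "arg_max_on z T = s (arg_max_on (R z) T)"
      using arg_max_on_comp_bij[OF s_T inj T(1)] j by auto
    then have "arg_max_on (R z) T = j' \<longleftrightarrow> arg_max_on z T = j"
      by (metis s_s fun_upd_same s_def)
    then show "z \<in> R -` ?A j' \<inter> space ?P \<longleftrightarrow> z \<in> ?A j"
      using measurable_space[OF R] by auto
  qed
  then have "measure ?P (R -` ?A j' \<inter> space ?P) = measure ?P (?A j)"
    using R A_sets by (intro measure_eq_AE) auto
  then show ?thesis
    using measure_distr[OF R A_sets] by (simp add: distr_R)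
qed

lemma measure_PiM_arg_max_on:
  assumes T: "finite T" "T \<subseteq> I" and j: "j \<in> T"
  shows "measure (\<Pi>\<^sub>M i\<in>I. M) {z \<in> space (\<Pi>\<^sub>M i\<in>I. M). arg_max_on z T = j} = 1 / card T"
proof -
  let ?P = "\<Pi>\<^sub>M i\<in>I. M"
  let ?A = "\<lambda>j. {z \<in> space ?P. arg_max_on z T = j}"
  interpret P: prob_space ?P by (intro prob_space_PiM prob_space_axioms)
  have A_sets: "?A i \<in> sets ?P" for i
    using measurable_sets[OF measurable_arg_max_on_PiM[OF sets_eq_borel T], of "{i}"]
    by (simp add: Int_def conj_commute)
  have "space ?P = (\<Union>i\<in>T. ?A i)"
    using arg_max_on_in[OF T(1)] j by auto
  then have "1 = measure ?P (\<Union>i\<in>T. ?A i)"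
    using P.prob_space by simp
  also have "\<dots> = (\<Sum>i\<in>T. measure ?P (?A i))"
    using T A_sets by (intro measure_finite_Union) (auto simp: disjoint_family_on_def)
  also have "\<dots> = card T * measure ?P (?A j)"
    using measure_PiM_arg_max_on_swap[OF T j] by simp
  moreover have "card T > 0"
    using T(1) j by (auto simp: card_gt_0_iff)
  ultimately show ?thesis
    by (simp add: field_simps)
qed

lemma distr_PiM_arg_max_on:
  assumes T: "finite T" "T \<subseteq> I" "T \<noteq> {}"
  shows "distr (\<Pi>\<^sub>M i\<in>I. M) (count_space UNIV) (\<lambda>z. arg_max_on z T)
       = uniform_measure (count_space UNIV) T"
proof (rule measure_eqI_countable_AE[where \<Omega> = T])
  let ?P = "\<Pi>\<^sub>M i\<in>I. M"
  interpret P: prob_space ?P by (intro prob_space_PiM prob_space_axioms)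
  have m: "(\<lambda>z. arg_max_on z T) \<in> ?P \<rightarrow>\<^sub>M count_space UNIV"
    using sets_eq_borel T(1,2) by (rule measurable_arg_max_on_PiM)
  show "AE x in distr ?P (count_space UNIV) (\<lambda>z. arg_max_on z T). x \<in> T"
    using T by (subst AE_distr_iff[OF m]) (auto intro: arg_max_on_in)
  show "AE x in uniform_measure (count_space UNIV) T. x \<in> T"
    by (rule AE_uniform_measureI) auto
  fix j assume "j \<in> T"
  have "emeasure (distr ?P (count_space UNIV) (\<lambda>z. arg_max_on z T)) {j}
      = ennreal (measure ?P {z \<in> space ?P. arg_max_on z T = j})"
    by (simp add: emeasure_distr[OF m] P.emeasure_eq_measure vimage_def Int_def conj_commute)
  also have "\<dots> = ennreal (1 / card T)"
    using measure_PiM_arg_max_on[OF T(1,2) \<open>j \<in> T\<close>] by simp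
  also have "\<dots> = emeasure (uniform_measure (count_space UNIV) T) {j}"
    using T \<open>j \<in> T\<close>
    by (simp add: divide_ennreal[symmetric] ennreal_of_nat_eq_real_of_nat card_gt_0_iff)
  finally show "emeasure (distr ?P (count_space UNIV) (\<lambda>z. arg_max_on z T)) {j}
      = emeasure (uniform_measure (count_space UNIV) T) {j}" .
qed (use T in \<open>auto intro: countable_finite\<close>)

lemma bind_uniform_measure_eq_distr_arg_max_on:
  assumes N: "prob_space N" and K: "finite K" and S: "S \<in> N \<rightarrow>\<^sub>M count_space (Pow K)"
    and nonempty: "AE x in N. S x \<noteq> {}"
  shows "N \<bind> (\<lambda>x. distr (uniform_measure (count_space UNIV) (S x)) (count_space UNIV) g)
       = distr (N \<Otimes>\<^sub>M (\<Pi>\<^sub>M i\<in>K. M)) (count_space UNIV) (\<lambda>(x, z). g (arg_max_on z (S x)))"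
proof -
  let ?P = "\<Pi>\<^sub>M i\<in>K. M"
  interpret N: prob_space N by (rule N)
  interpret P: prob_space ?P by (intro prob_space_PiM prob_space_axioms)
  interpret NP: pair_prob_space N ?P ..
  have S_sub: "S x \<subseteq> K" if "x \<in> space N" for x
    using measurable_space[OF S that] by simp
  have kernel_A: "(\<lambda>x. distr (uniform_measure (count_space UNIV) (S x)) (count_space UNIV) g)
      \<in> N \<rightarrow>\<^sub>M subprob_algebra (count_space UNIV)"
    using K by (intro measurable_compose[OF S])
      (auto simp: space_subprob_algebra finite_subset
        intro!: subprob_space.subprob_space_distr subprob_space_uniform_count_space)
  have "(\<lambda>p. arg_max_on (snd p) (S (fst p))) \<in> N \<Otimes>\<^sub>M ?P \<rightarrow>\<^sub>M count_space UNIV"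
    by (rule measurable_arg_max_on[OF K measurable_compose[OF measurable_fst S]])
      (auto intro!: measurable_snd'' measurable_PiM_component_real sets_eq_borel)
  then have argmax: "(\<lambda>(x, z). g (arg_max_on z (S x))) \<in> N \<Otimes>\<^sub>M ?P \<rightarrow>\<^sub>M count_space UNIV"
    unfolding case_prod_beta' by (rule measurable_compose) simp
  have kernel_B: "(\<lambda>x. distr ?P (count_space UNIV) (\<lambda>z. g (arg_max_on z (S x))))
      \<in> N \<rightarrow>\<^sub>M subprob_algebra (count_space UNIV)"
    using argmax P.M_in_subprob by (intro measurable_distr2[where M = ?P]) auto
  have "AE x in N. distr (uniform_measure (count_space UNIV) (S x)) (count_space UNIV) g
      = distr ?P (count_space UNIV) (\<lambda>z. g (arg_max_on z (S x)))"
    using nonempty AE_space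
  proof eventually_elim
    case (elim x)
    then have sub: "S x \<subseteq> K"
      using S_sub by simp
    have T: "finite (S x)" "S x \<subseteq> K" "S x \<noteq> {}"
      using finite_subset[OF sub K] sub elim by auto
    then have "uniform_measure (count_space UNIV) (S x) = distr ?P (count_space UNIV) (\<lambda>z. arg_max_on z (S x))"
      by (intro distr_PiM_arg_max_on[symmetric])
    moreover have "(\<lambda>z. arg_max_on z (S x)) \<in> ?P \<rightarrow>\<^sub>M count_space UNIV"
      using sets_eq_borel T(1,2) by (rule measurable_arg_max_on_PiM)
    ultimately show ?case
      by (simp add: distr_distr comp_def)
  qed
  then have "N \<bind> (\<lambda>x. distr (uniform_measure (count_space UNIV) (S x)) (count_space UNIV) g)
      = N \<bind> (\<lambda>x. distr ?P (count_space UNIV) (\<lambda>z. g (arg_max_on z (S x))))"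
    by (intro bind_cong_AE[OF refl kernel_A kernel_B])
  also have "\<dots> = distr (N \<Otimes>\<^sub>M ?P) (count_space UNIV) (\<lambda>(x, z). g (arg_max_on z (S x)))"
    using argmax by (simp add: NP.distr_pair_measure_eq_bind)
  finally show ?thesis .
qed

end

lemma atomless_real_prob_space_expo:
  assumes "0 < l"
  shows "atomless_real_prob_space (expo l)"
proof (intro atomless_real_prob_space.intro atomless_real_prob_space_axioms.intro)
  show "prob_space (expo l)"
    unfolding expo_def using assms by (rule prob_space_exponential_density)
  show "sets (expo l) = sets borel"
    by (simp add: expo_def)
  fix x
  have "AE y in lborel. y \<in> {x} \<longrightarrow> ennreal (exponential_density l y) = 0"
    using AE_lborel_singleton[of x] by eventually_elim auto
  then have "{x} \<in> null_sets (expo l)"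
    unfolding expo_def by (subst null_sets_density_iff) auto
  then show "emeasure (expo l) {x} = 0" by auto
qed

lemma AE_expo_nonneg: "AE x in expo l. 0 \<le> x"
  unfolding expo_def by (subst AE_density) (auto simp: exponential_density_def)

lemma qstar_attained: "0 < k \<Longrightarrow> \<exists>i<k. q D (omega i) = qstar q D omega k"
  unfolding qstar_def using Max_in[of "(\<lambda>i. q D (omega i)) ` {..<k}"] by fastforce

definition above_qstar :: "('d \<Rightarrow> 'o \<Rightarrow> real) \<Rightarrow> 'd \<Rightarrow> (nat \<Rightarrow> 'o) \<Rightarrow> nat \<Rightarrow> (nat \<Rightarrow> real) \<Rightarrow> nat set"
  where "above_qstar q D omega k X = {i \<in> {..<k}. qstar q D omega k \<le> q D (omega i) + X i}"

lemma measurable_above_qstar: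
  assumes "sets M = sets borel"
  shows "above_qstar q D omega k \<in> (\<Pi>\<^sub>M i\<in>{..<k}. M) \<rightarrow>\<^sub>M count_space (Pow {..<k})"
proof (rule measurable_finite_set_valued)
  fix i assume "i \<in> {..<k}"
  then have [measurable]: "(\<lambda>X. X i) \<in> borel_measurable (\<Pi>\<^sub>M i\<in>{..<k}. M)"
    using assms by (intro measurable_PiM_component_real)
  show "Measurable.pred (\<Pi>\<^sub>M i\<in>{..<k}. M) (\<lambda>X. i \<in> above_qstar q D omega k X)"
    using \<open>i \<in> {..<k}\<close> by (simp add: above_qstar_def, measurable)
qed (auto simp: above_qstar_def)

lemma AE_above_qstar_nonempty:
  assumes "0 < k" "prob_space M" "AE x in M. 0 \<le> x"
  shows "AE X in (\<Pi>\<^sub>M i\<in>{..<k}. M). above_qstar q D omega k X \<noteq> {}"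
proof -
  obtain i where i: "i < k" "q D (omega i) = qstar q D omega k"
    using qstar_attained[OF assms(1), of q D omega] by blast
  have "AE X in (\<Pi>\<^sub>M i\<in>{..<k}. M). 0 \<le> X i"
    using AE_PiM_component[of "{..<k}" "\<lambda>_. M" i "\<lambda>x. 0 \<le> x"] i(1) assms(2,3) by simp
  moreover have "i \<in> above_qstar q D omega k X" if "0 \<le> X i" for X
    using i that by (simp add: above_qstar_def)
  ultimately show ?thesis
    by (auto elim: eventually_mono)
qed

theorem lemma2:
  fixes q :: "'d \<Rightarrow> 'o \<Rightarrow> real" and D :: 'd and omega :: "nat \<Rightarrow> 'o"
    and k :: nat and Delta eps :: real and adj :: "'d \<Rightarrow> 'd \<Rightarrow> bool"
  assumes "k > 0"
    and "inj_on omega {..<k}"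
    and "Delta > 0"
    and "\<And>D1 D2 w. adj D1 D2 \<Longrightarrow> \<bar>q D1 w - q D2 w\<bar> \<le> Delta"
    and "eps > 0"
  shows "alg_A q D omega k Delta eps = alg_B q D omega k Delta eps"
proof -
  define l where "l = eps / (2 * Delta)"
  let ?P = "\<Pi>\<^sub>M i\<in>{..<k}. expo l"
  let ?S = "above_qstar q D omega k"
  interpret expo: atomless_real_prob_space "expo l"
    using assms(3,5) by (intro atomless_real_prob_space_expo) (simp add: l_def)
  have "alg_A q D omega k Delta eps
      = ?P \<bind> (\<lambda>X. distr (uniform_measure (count_space UNIV) (?S X)) (count_space UNIV) omega)"
    by (simp add: alg_A_def above_qstar_def l_def Let_def)
  also have "\<dots> = distr (?P \<Otimes>\<^sub>M ?P) (count_space UNIV) (\<lambda>(X, z). omega (arg_max_on z (?S X)))"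
    using assms(1) expo.prob_space_axioms
    by (intro expo.bind_uniform_measure_eq_distr_arg_max_on prob_space_PiM measurable_above_qstar
        AE_above_qstar_nonempty expo.sets_eq_borel AE_expo_nonneg) auto
  also have "\<dots> = alg_B q D omega k Delta eps"
    unfolding alg_B_def Let_def arg_max_on_min_threshold by (simp add: above_qstar_def l_def)
  finally show ?thesis .
qed

end
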